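(* Let $G=(V,E_r,E_b)$ be a two-colored graph that contains no monochromatic $K_3$ and no monochromatic $P_3$ as induced subgraphs. Then every vertex of $G$ is incident with at most two blue edges and with at most two red edges.
   Context: A two-colored graph $G=(V,E_r,E_b)$ is a finite simple undirected graph whose edge set is partitioned into red edges $E_r$ and blue edges $E_b$. A monochromatic $K_3$ is a triangle all three of whose edges have the same color. A monochromatic $P_3$ is an induced path on three vertices $u,v,w$ (edges $\{u,v\},\{v,w\}$, non-edge $\{u,w\}$) whose two edges have the same color. *)

theory Defs
  imports Main
begin

definition two_colored_graph :: "'a set \<Rightarrow> ('a \<Rightarrow> 'a \<Rightarrow> bool) \<Rightarrow> ('a \<Rightarrow> 'a \<Rightarrow> bool) \<Rightarrow> bool" where
  "two_colored_graph V R B \<longleftrightarrow> finite V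
     \<and> (\<forall>u v. R u v \<longrightarrow> u \<in> V \<and> v \<in> V \<and> u \<noteq> v \<and> R v u)
     \<and> (\<forall>u v. B u v \<longrightarrow> u \<in> V \<and> v \<in> V \<and> u \<noteq> v \<and> B v u)
     \<and> (\<forall>u v. \<not> (R u v \<and> B u v))"

definition adj :: "('a \<Rightarrow> 'a \<Rightarrow> bool) \<Rightarrow> ('a \<Rightarrow> 'a \<Rightarrow> bool) \<Rightarrow> 'a \<Rightarrow> 'a \<Rightarrow> bool" where
  "adj R B u v \<longleftrightarrow> R u v \<or> B u v"

definition has_mono_K3 :: "('a \<Rightarrow> 'a \<Rightarrow> bool) \<Rightarrow> bool" where
  "has_mono_K3 C \<longleftrightarrow> (\<exists>u v w. C u v \<and> C v w \<and> C u w)"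

definition has_mono_P3 :: "('a \<Rightarrow> 'a \<Rightarrow> bool) \<Rightarrow> ('a \<Rightarrow> 'a \<Rightarrow> bool) \<Rightarrow> ('a \<Rightarrow> 'a \<Rightarrow> bool) \<Rightarrow> bool" where
  "has_mono_P3 R B C \<longleftrightarrow> (\<exists>u v w. C u v \<and> C v w \<and> u \<noteq> w \<and> \<not> adj R B u w)"

end

theory Submission
  imports Defs
begin

text \<open>Any two red neighbours x, y of a vertex v must be adjacent, since otherwise x-v-y is an
  induced red P3, and the edge between them cannot be red, since then v, x, y span a red triangle.
  So they are joined by a blue edge, and three red neighbours of v would span a blue triangle.
  Exchanging the roles of the colours gives the bound for blue.\<close>

lemma adj_commute: "adj R B = adj B R"
  by (auto simp: adj_def fun_eq_iff)

lemma has_mono_P3_commute: "has_mono_P3 R B C = has_mono_P3 B R C"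
  by (simp add: has_mono_P3_def adj_commute)

lemma two_colored_graph_commute: "two_colored_graph V R B = two_colored_graph V B R"
  by (auto simp: two_colored_graph_def)

lemma red_neighbours_blue_adjacent:
  assumes G: "two_colored_graph V R B"
    and no_K3: "\<not> has_mono_K3 R" and no_P3: "\<not> has_mono_P3 R B R"
    and "R v x" "R v y" "x \<noteq> y"
  shows "B x y"
proof -
  have "R x v" using G \<open>R v x\<close> by (auto simp: two_colored_graph_def)
  with no_P3 \<open>R v y\<close> \<open>x \<noteq> y\<close> have "R x y \<or> B x y"
    by (auto simp: has_mono_P3_def adj_def)
  moreover have "\<not> R x y" using no_K3 \<open>R v x\<close> \<open>R v y\<close> by (auto simp: has_mono_K3_def)
  ultimately show ?thesis by blast
qed

lemma red_degree_le_2: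
  assumes G: "two_colored_graph V R B"
    and "\<not> has_mono_K3 R" "\<not> has_mono_K3 B" "\<not> has_mono_P3 R B R"
  shows "card {w \<in> V. R v w} \<le> 2"
proof (rule ccontr)
  assume "\<not> card {w \<in> V. R v w} \<le> 2"
  then have "Suc (Suc (Suc 0)) \<le> card {w \<in> V. R v w}" by simp
  then obtain a b c where "R v a" "R v b" "R v c" "a \<noteq> b" "a \<noteq> c" "b \<noteq> c"
    by (auto simp: card_le_Suc_iff)
  then have "B a b" "B b c" "B a c"
    using red_neighbours_blue_adjacent[OF assms(1,2,4)] by auto
  with \<open>\<not> has_mono_K3 B\<close> show False by (auto simp: has_mono_K3_def)
qed

theorem lemma4:
  fixes V :: "'a set" and R B :: "'a \<Rightarrow> 'a \<Rightarrow> bool"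
  assumes "two_colored_graph V R B"
    and "\<not> has_mono_K3 R" and "\<not> has_mono_K3 B"
    and "\<not> has_mono_P3 R B R" and "\<not> has_mono_P3 R B B"
  shows "\<forall>v\<in>V. card {w \<in> V. B v w} \<le> 2 \<and> card {w \<in> V. R v w} \<le> 2"
proof (intro ballI conjI)
  fix v
  show "card {w \<in> V. R v w} \<le> 2"
    using red_degree_le_2 assms(1-4) .
  show "card {w \<in> V. B v w} \<le> 2"
    using red_degree_le_2[of V B R] assms(1,2,3,5)
    by (simp add: two_colored_graph_commute has_mono_P3_commute)
qed

end
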